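(* For every $n\ge1$, $$\text{(a)}\quad r_nx_1=q^{1/2}s_ny_1+r_{n-1}x_2,\qquad\text{(b)}\quad x_2s_n=r_{n-1}+q^{-1/2}M[1,0,1,1]\,s_{n-1}.$$
   Context: Based quantum torus: basis $M[a]$, $a\in\mathbb{Z}^4$, $M[a]M[b]=q^{\frac12a^T\Lambda b}M[a+b]$ with $\Lambda=\begin{pmatrix}0&0&-1&0\\0&0&0&-1\\1&0&0&-2\\0&1&2&0\end{pmatrix}$; $x_1=M[e_1],x_2=M[e_2],y_1=M[e_3],y_2=M[e_4]$. Snake graphs: for $n\ge0$, $\mathcal G_n$ is a horizontal row of $2n+1$ unit square tiles $G_{-n},\dots,G_n$ (left to right, consecutive tiles sharing a vertical edge); $G_i$ has face weight $1$ if $i+n$ is even and face weight $2$ if $i+n$ is odd. The top and bottom edges of a tile of face weight $1$ have edge weight $2$; the top and bottom edges of a tile of face weight $2$ have edge weight $1$; vertical edges carry no weight. $\mathcal H_n$ is obtained from $\mathcal G_n$ by deleting the rightmost tile $G_n$ (keeping the tiles $H_i:=G_i$, $-n\le i\le n-1$, and their edges); $\mathcal H_0$ is a single vertical edge. The minimal perfect matching $P_{min}$ of $\mathcal G_n$ consists of the top and bottom edges of all tiles of face weight $1$; that of $\mathcal H_n$ ($n\ge1$) consists of the top and bottom edges of its tiles of face weight $1$ together with its rightmost vertical edge. For a perfect matching $P$, $\mathrm{Twist}(P)$ is the set of tiles in the interior of cycles of $P\triangle P_{min}$, $y_i(P)$ the number of twisted tiles of face weight $i$, and $a_i(P)$ the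 number of edges of $P$ of edge weight $i$. Set $\nu(P)=(a_1(P)-N_1,\,a_2(P)-N_2,\,y_1(P),\,y_2(P))\in\mathbb{Z}^4$, where $N_i$ is the number of tiles of face weight $i$ (for $\mathcal G_n$: $N_1=n+1,N_2=n$; for $\mathcal H_n$: $N_1=N_2=n$). Tile exponents: in $\mathcal G_n$, $\alpha(G_i)=i/2$ if $G_i$ has face weight $1$ and $-i/2$ if weight $2$; in $\mathcal H_n$, $\alpha(H_i)=(i+1)/2$ if $H_i$ has face weight $1$ and $-i/2$ if weight $2$. $\alpha(P)=\sum_{G\in\mathrm{Twist}(P)}\alpha(G)$. Finally $r_n=\sum_{P\models\mathcal G_n}q^{\alpha(P)}M[\nu(P)]$ and $s_n=\sum_{P\models\mathcal H_n}q^{\alpha(P)}M[\nu(P)]$ (sums over perfect matchings). *)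

theory Defs
  imports Main "HOL-Library.Multiset"
begin

text \<open>A monomial q^(k/2) M[a] (a in Z^4) is encoded as the pair (k, a).
  Every element occurring in the theorem is a sum of such monomials with
  coefficient 1, so elements are represented by multisets of monomials; since
  the monomials q^(k/2) M[a] form a Z-basis of the quantum torus over
  Z[q^(1/2), q^(-1/2)], equality of multisets is exactly equality in the torus.\<close>

type_synonym vec4 = "int \<times> int \<times> int \<times> int"
type_synonym qmono = "int \<times> vec4"

text \<open>a^T Lambda b for the given matrix Lambda.\<close>
fun lam :: "vec4 \<Rightarrow> vec4 \<Rightarrow> int" where
  "lam (a1, a2, a3, a4) (b1, b2, b3, b4) =
     - a1 * b3 - a2 * b4 + a3 * b1 - 2 * a3 * b4 + a4 * b2 + 2 * a4 * b3"

fun vadd :: "vec4 \<Rightarrow> vec4 \<Rightarrow> vec4" where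
  "vadd (a1, a2, a3, a4) (b1, b2, b3, b4) = (a1 + b1, a2 + b2, a3 + b3, a4 + b4)"

text \<open>(q^(k/2) M[a]) (q^(l/2) M[b]) = q^((k + l + a^T Lambda b)/2) M[a+b].\<close>
definition mono_mult :: "qmono \<Rightarrow> qmono \<Rightarrow> qmono" where
  "mono_mult x y = (fst x + fst y + lam (snd x) (snd y), vadd (snd x) (snd y))"

definition qmult :: "qmono multiset \<Rightarrow> qmono multiset \<Rightarrow> qmono multiset" where
  "qmult A B = (\<Sum>x\<in>#A. image_mset (mono_mult x) B)"

definition qM :: "int \<Rightarrow> vec4 \<Rightarrow> qmono multiset" where
  "qM k a = {#(k, a)#}"

definition X1 :: "qmono multiset" where "X1 = qM 0 (1, 0, 0, 0)"
definition X2 :: "qmono multiset" where "X2 = qM 0 (0, 1, 0, 0)"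
definition Y1 :: "qmono multiset" where "Y1 = qM 0 (0, 0, 1, 0)"
definition Y2 :: "qmono multiset" where "Y2 = qM 0 (0, 0, 0, 1)"

text \<open>Vertices are lattice points (x,y), x \<le> m, y \<in> {0,1}; tile j (j < m) is the
  square [j,j+1] x [0,1].  G_n is the row with m = 2n+1 tiles, tile j being
  G_(j-n); H_n is the row with m = 2n tiles, tile j being H_(j-n)
  (for n = 0 this is the single vertical edge).  Face weight of tile j is 1
  iff j is even (i.e. i+n even for i = j-n).\<close>

type_synonym vert = "nat \<times> nat"

definition bot_edge :: "nat \<Rightarrow> vert set" where "bot_edge j = {(j, 0), (Suc j, 0)}"
definition top_edge :: "nat \<Rightarrow> vert set" where "top_edge j = {(j, 1), (Suc j, 1)}"
definition vert_edge :: "nat \<Rightarrow> vert set" where "vert_edge x = {(x, 0), (x, 1)}"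

definition row_verts :: "nat \<Rightarrow> vert set" where
  "row_verts m = {(x, y). x \<le> m \<and> y \<le> 1}"

definition row_edges :: "nat \<Rightarrow> vert set set" where
  "row_edges m = bot_edge ` {..<m} \<union> top_edge ` {..<m} \<union> vert_edge ` {..m}"

definition perfect_matching :: "nat \<Rightarrow> vert set set \<Rightarrow> bool" where
  "perfect_matching m P \<longleftrightarrow> P \<subseteq> row_edges m \<and> (\<forall>v\<in>row_verts m. \<exists>!e\<in>P. v \<in> e)"

definition face_weight :: "nat \<Rightarrow> nat" where
  "face_weight j = (if even j then 1 else 2)"

text \<open>Edge weight of an edge of the row with m tiles (0 = no weight):
  top/bottom edges of a weight-1 tile have weight 2, of a weight-2 tile weight 1.\<close>
definition edge_weight :: "nat \<Rightarrow> vert set \<Rightarrow> nat" where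
  "edge_weight m e =
     (if \<exists>j<m. e = bot_edge j \<or> e = top_edge j
      then (if face_weight (THE j. j < m \<and> (e = bot_edge j \<or> e = top_edge j)) = 1 then 2 else 1)
      else 0)"

definition P_min :: "nat \<Rightarrow> vert set set" where
  "P_min m = bot_edge ` {j. j < m \<and> even j} \<union> top_edge ` {j. j < m \<and> even j}
             \<union> (if even m then {vert_edge m} else {})"

text \<open>Interior of (a disjoint union of) cycles C by the even-odd rule: tile j lies
  in the interior iff the upward vertical ray from its centre (j+1/2, 1/2) crosses
  an odd number of edges of C.  The only grid edges met by this ray are
  horizontal edges [j,j+1] x {y} with y \<ge> 1.\<close>
definition crosses_up_ray :: "nat \<Rightarrow> vert set \<Rightarrow> bool" where
  "crosses_up_ray j e \<longleftrightarrow> (\<exists>y\<ge>1. e = {(j, y), (Suc j, y)})"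

definition interior_tiles :: "nat \<Rightarrow> vert set set \<Rightarrow> nat set" where
  "interior_tiles m C = {j. j < m \<and> odd (card {e \<in> C. crosses_up_ray j e})}"

definition Twist :: "nat \<Rightarrow> vert set set \<Rightarrow> nat set" where
  "Twist m P = interior_tiles m (P - P_min m \<union> (P_min m - P))"

definition y_count :: "nat \<Rightarrow> nat \<Rightarrow> vert set set \<Rightarrow> int" where
  "y_count m i P = int (card {j \<in> Twist m P. face_weight j = i})"

definition a_count :: "nat \<Rightarrow> nat \<Rightarrow> vert set set \<Rightarrow> int" where
  "a_count m i P = int (card {e \<in> P. edge_weight m e = i})"

definition N_count :: "nat \<Rightarrow> nat \<Rightarrow> int" where
  "N_count m i = int (card {j. j < m \<and> face_weight j = i})"

definition nu :: "nat \<Rightarrow> vert set set \<Rightarrow> vec4" where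
  "nu m P = (a_count m 1 P - N_count m 1, a_count m 2 P - N_count m 2,
             y_count m 1 P, y_count m 2 P)"

text \<open>Twice the tile exponents (so that q^alpha = (q^(1/2))^(2 alpha)).
  In G_n tile j is G_i with i = j - n: alpha = i/2 (weight 1), -i/2 (weight 2).
  In H_n tile j is H_i with i = j - n: alpha = (i+1)/2 (weight 1), -i/2 (weight 2).\<close>
definition alpha2_G :: "nat \<Rightarrow> nat \<Rightarrow> int" where
  "alpha2_G n j = (let i = int j - int n in if face_weight j = 1 then i else - i)"

definition alpha2_H :: "nat \<Rightarrow> nat \<Rightarrow> int" where
  "alpha2_H n j = (let i = int j - int n in if face_weight j = 1 then i + 1 else - i)"

definition alpha2_P_G :: "nat \<Rightarrow> vert set set \<Rightarrow> int" where
  "alpha2_P_G n P = (\<Sum>j\<in>Twist (2 * n + 1) P. alpha2_G n j)"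

definition alpha2_P_H :: "nat \<Rightarrow> vert set set \<Rightarrow> int" where
  "alpha2_P_H n P = (\<Sum>j\<in>Twist (2 * n) P. alpha2_H n j)"

definition r_snake :: "nat \<Rightarrow> qmono multiset" where
  "r_snake n = image_mset (\<lambda>P. (alpha2_P_G n P, nu (2 * n + 1) P))
                 (mset_set {P. perfect_matching (2 * n + 1) P})"

definition s_snake :: "nat \<Rightarrow> qmono multiset" where
  "s_snake n = image_mset (\<lambda>P. (alpha2_P_H n P, nu (2 * n) P))
                 (mset_set {P. perfect_matching (2 * n) P})"

end

theory Submission
  imports Defs
begin

text \<open>A perfect matching of a row of \<open>m + 2\<close> tiles either contains the rightmost vertical
  edge, and is then a matching of the first \<open>m + 1\<close> tiles plus that edge, or contains the
  top and bottom edges of the last tile, and is then a matching of the first \<open>m\<close> tiles plus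
  these two edges.  Splitting the sums \<open>r\<^sub>n\<close> and \<open>s\<^sub>n\<close> accordingly, the two recurrences become
  identities between single monomials: the twist set of an extended matching is the old one
  plus the even tiles just added, and \<open>\<nu>\<close> is determined by the numbers of twisted tiles of each
  face weight, because in a perfect matching of a row horizontal edges come in top/bottom
  pairs.\<close>

lemma edge_eq_iff [simp]:
  "bot_edge i = bot_edge j \<longleftrightarrow> i = j"
  "top_edge i = top_edge j \<longleftrightarrow> i = j"
  "vert_edge i = vert_edge j \<longleftrightarrow> i = j"
  "bot_edge i \<noteq> top_edge j" "top_edge j \<noteq> bot_edge i"
  "bot_edge i \<noteq> vert_edge j" "vert_edge j \<noteq> bot_edge i"
  "top_edge i \<noteq> vert_edge j" "vert_edge j \<noteq> top_edge i"
  by (auto simp: bot_edge_def top_edge_def vert_edge_def doubleton_eq_iff)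

lemma mem_edge_iff [simp]:
  "v \<in> bot_edge j \<longleftrightarrow> snd v = 0 \<and> (fst v = j \<or> fst v = Suc j)"
  "v \<in> top_edge j \<longleftrightarrow> snd v = 1 \<and> (fst v = j \<or> fst v = Suc j)"
  "v \<in> vert_edge x \<longleftrightarrow> fst v = x \<and> (snd v = 0 \<or> snd v = 1)"
  by (cases v; auto simp: bot_edge_def top_edge_def vert_edge_def)+

lemma mem_row_edges_iff:
  "e \<in> row_edges m \<longleftrightarrow>
     (\<exists>j<m. e = bot_edge j) \<or> (\<exists>j<m. e = top_edge j) \<or> (\<exists>x\<le>m. e = vert_edge x)"
  by (auto simp: row_edges_def)

lemma edge_in_row_edges_iff [simp]:
  "bot_edge j \<in> row_edges m \<longleftrightarrow> j < m"
  "top_edge j \<in> row_edges m \<longleftrightarrow> j < m"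
  "vert_edge x \<in> row_edges m \<longleftrightarrow> x \<le> m"
  by (auto simp: mem_row_edges_iff)

lemma row_edges_mono: "m \<le> m' \<Longrightarrow> row_edges m \<subseteq> row_edges m'"
  by (auto simp: mem_row_edges_iff)

lemma mem_row_edges_Suc_iff:
  "e \<in> row_edges (Suc m) \<longleftrightarrow>
     e \<in> row_edges m \<or> e = bot_edge m \<or> e = top_edge m \<or> e = vert_edge (Suc m)"
  by (auto simp: mem_row_edges_iff less_Suc_eq le_Suc_eq)

lemma finite_row_edges: "finite (row_edges m)"
  by (simp add: row_edges_def)

lemma vertex_of_row_edge: "e \<in> row_edges m \<Longrightarrow> v \<in> e \<Longrightarrow> fst v \<le> m"
  by (auto simp: mem_row_edges_iff)

subsection \<open>Perfect matchings of a row\<close>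

lemma perfect_matching_iff:
  "perfect_matching m P \<longleftrightarrow> P \<subseteq> row_edges m \<and>
     (\<forall>v. fst v \<le> m \<longrightarrow> snd v \<le> 1 \<longrightarrow> (\<exists>e\<in>P. v \<in> e)) \<and>
     (\<forall>v e e'. fst v \<le> m \<longrightarrow> snd v \<le> 1 \<longrightarrow> e \<in> P \<longrightarrow> e' \<in> P \<longrightarrow> v \<in> e \<longrightarrow> v \<in> e' \<longrightarrow> e = e')"
proof -
  have "v \<in> row_verts m \<longleftrightarrow> fst v \<le> m \<and> snd v \<le> 1" for v
    by (cases v) (auto simp: row_verts_def)
  then show ?thesis
    unfolding perfect_matching_def by blast
qed

lemma perfect_matching_subset: "perfect_matching m P \<Longrightarrow> P \<subseteq> row_edges m"
  by (simp add: perfect_matching_iff)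

lemma perfect_matching_covers:
  "perfect_matching m P \<Longrightarrow> fst v \<le> m \<Longrightarrow> snd v \<le> 1 \<Longrightarrow> \<exists>e\<in>P. v \<in> e"
  unfolding perfect_matching_iff by blast

lemma perfect_matching_unique:
  "perfect_matching m P \<Longrightarrow> fst v \<le> m \<Longrightarrow> snd v \<le> 1 \<Longrightarrow> e \<in> P \<Longrightarrow> e' \<in> P \<Longrightarrow>
     v \<in> e \<Longrightarrow> v \<in> e' \<Longrightarrow> e = e'"
  unfolding perfect_matching_iff by blast

definition matchings :: "nat \<Rightarrow> vert set set set" where
  "matchings m = {P. perfect_matching m P}"

lemma finite_matchings: "finite (matchings m)"
  by (rule finite_subset[of _ "Pow (row_edges m)"])
    (auto simp: matchings_def finite_row_edges dest: perfect_matching_subset)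

definition add_tile :: "nat \<Rightarrow> vert set set \<Rightarrow> vert set set" where
  "add_tile j P = P \<union> {bot_edge j, top_edge j}"

lemma perfect_matching_insert_vert_edge:
  assumes "perfect_matching m P"
  shows "perfect_matching (Suc m) (insert (vert_edge (Suc m)) P)"
proof -
  note sub = perfect_matching_subset[OF assms]
    and cov = perfect_matching_covers[OF assms]
    and uniq = perfect_matching_unique[OF assms]
  have left: "e \<in> P \<Longrightarrow> v \<in> e \<Longrightarrow> fst v \<le> m" for e v
    using sub vertex_of_row_edge by blast
  show ?thesis unfolding perfect_matching_iff
  proof (intro conjI allI impI)
    show "insert (vert_edge (Suc m)) P \<subseteq> row_edges (Suc m)"
      using sub row_edges_mono[of m "Suc m"] by auto
  next
    fix v :: vert assume "fst v \<le> Suc m" "snd v \<le> 1"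
    then show "\<exists>e\<in>insert (vert_edge (Suc m)) P. v \<in> e"
      using cov by (cases "fst v = Suc m") auto
  next
    fix v :: vert and e e'
    assume v: "fst v \<le> Suc m" "snd v \<le> 1"
      and e: "e \<in> insert (vert_edge (Suc m)) P" "v \<in> e"
      and e': "e' \<in> insert (vert_edge (Suc m)) P" "v \<in> e'"
    show "e = e'"
    proof (cases "fst v \<le> m")
      case True
      then have "e \<in> P" "e' \<in> P" using e e' by auto
      then show ?thesis using True v e e' uniq[of v e e'] by blast
    next
      case False
      then have "e \<notin> P" "e' \<notin> P" using e e' left by fastforce+
      then show ?thesis using e e' by auto
    qed
  qed
qed

lemma perfect_matching_add_tile:
  assumes "perfect_matching m P"
  shows "perfect_matching (Suc (Suc m)) (add_tile (Suc m) P)"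
proof -
  note sub = perfect_matching_subset[OF assms]
    and cov = perfect_matching_covers[OF assms]
    and uniq = perfect_matching_unique[OF assms]
  have left: "e \<in> P \<Longrightarrow> v \<in> e \<Longrightarrow> fst v \<le> m" for e v
    using sub vertex_of_row_edge by blast
  show ?thesis unfolding perfect_matching_iff add_tile_def
  proof (intro conjI allI impI)
    show "P \<union> {bot_edge (Suc m), top_edge (Suc m)} \<subseteq> row_edges (Suc (Suc m))"
      using sub row_edges_mono[of m "Suc (Suc m)"] by auto
  next
    fix v :: vert assume v: "fst v \<le> Suc (Suc m)" "snd v \<le> 1"
    show "\<exists>e\<in>P \<union> {bot_edge (Suc m), top_edge (Suc m)}. v \<in> e"
    proof (cases "fst v \<le> m")
      case True
      then show ?thesis using cov v by blast
    next
      case False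
      then have "fst v = Suc m \<or> fst v = Suc (Suc m)" "snd v = 0 \<or> snd v = 1"
        using v by linarith+
      then show ?thesis by auto
    qed
  next
    fix v :: vert and e e'
    assume v: "fst v \<le> Suc (Suc m)" "snd v \<le> 1"
      and e: "e \<in> P \<union> {bot_edge (Suc m), top_edge (Suc m)}" "v \<in> e"
      and e': "e' \<in> P \<union> {bot_edge (Suc m), top_edge (Suc m)}" "v \<in> e'"
    show "e = e'"
    proof (cases "fst v \<le> m")
      case True
      then have "e \<in> P" "e' \<in> P" using e e' by auto
      then show ?thesis using True v e e' uniq[of v e e'] by blast
    next
      case False
      then have "e \<notin> P" "e' \<notin> P" using e e' left by fastforce+
      then show ?thesis using e e' by auto
    qed
  qed
qed

lemma perfect_matching_Diff:
  assumes "perfect_matching m P" "k \<le> m" "\<And>e. e \<in> P - D \<Longrightarrow> e \<in> row_edges k"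
    and "\<And>v e. fst v \<le> k \<Longrightarrow> e \<in> P \<Longrightarrow> v \<in> e \<Longrightarrow> e \<notin> D"
  shows "perfect_matching k (P - D)"
  unfolding perfect_matching_iff
proof (intro conjI allI impI)
  show "P - D \<subseteq> row_edges k" using assms(3) by blast
next
  fix v :: vert assume v: "fst v \<le> k" "snd v \<le> 1"
  then obtain e where "e \<in> P" "v \<in> e"
    using perfect_matching_covers[OF assms(1), of v] assms(2) by auto
  then show "\<exists>e\<in>P - D. v \<in> e" using assms(4) v by blast
next
  fix v :: vert and e e'
  assume "fst v \<le> k" "snd v \<le> 1" "e \<in> P - D" "e' \<in> P - D" "v \<in> e" "v \<in> e'"
  then show "e = e'" using perfect_matching_unique[OF assms(1), of v e e'] assms(2) by auto
qed

text \<open>The vertex \<open>(m + 1, 0)\<close> is matched either by the rightmost vertical edge or by the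
  bottom edge of the last tile; in the second case \<open>(m + 1, 1)\<close> forces the top edge, and
  the vertices \<open>(m, 0)\<close> and \<open>(m, 1)\<close> are then no longer available to the rest of \<open>P\<close>.\<close>
lemma perfect_matching_Suc_cases:
  assumes "perfect_matching (Suc m) P"
  obtains (vertical) "vert_edge (Suc m) \<in> P" "perfect_matching m (P - {vert_edge (Suc m)})"
  | (horizontal) "bot_edge m \<in> P" "top_edge m \<in> P"
      "\<And>k. m = Suc k \<Longrightarrow> perfect_matching k (P - {bot_edge m, top_edge m})"
proof -
  note sub = perfect_matching_subset[OF assms]
    and cov = perfect_matching_covers[OF assms]
    and uniq = perfect_matching_unique[OF assms]
  note restrict = perfect_matching_Diff[OF assms]
  obtain e0 where e0: "e0 \<in> P" "(Suc m, 0) \<in> e0"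
    using cov[of "(Suc m, 0)"] by auto
  have "e0 \<in> row_edges (Suc m)" using e0 sub by auto
  then have "e0 = bot_edge m \<or> e0 = vert_edge (Suc m)"
    using e0(2) by (auto simp: mem_row_edges_iff)
  then show thesis
  proof
    assume bot: "e0 = bot_edge m"
    have no_vert: "vert_edge (Suc m) \<notin> P" "vert_edge m \<notin> P"
      using uniq[of "(Suc m, 0)" "vert_edge (Suc m)" "bot_edge m"]
        uniq[of "(m, 0)" "vert_edge m" "bot_edge m"] e0 bot by auto
    obtain e1 where e1: "e1 \<in> P" "(Suc m, 1) \<in> e1"
      using cov[of "(Suc m, 1)"] by auto
    have "e1 \<in> row_edges (Suc m)" using e1 sub by auto
    then have top: "top_edge m \<in> P"
      using e1 no_vert by (auto simp: mem_row_edges_iff)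
    have "perfect_matching k (P - {bot_edge m, top_edge m})" if k: "m = Suc k" for k
    proof (rule restrict)
      have "bot_edge k \<notin> P" "top_edge k \<notin> P"
        using uniq[of "(m, 0)" "bot_edge k" "bot_edge m"] uniq[of "(m, 1)" "top_edge k" "top_edge m"]
          e0 bot top k by auto
      then show "e \<in> row_edges k" if "e \<in> P - {bot_edge m, top_edge m}" for e
        using that sub no_vert k mem_row_edges_Suc_iff[of e "Suc k"] mem_row_edges_Suc_iff[of e k]
        by blast
    qed (use k in auto)
    then show thesis using horizontal e0 bot top by blast
  next
    assume vert: "e0 = vert_edge (Suc m)"
    have "bot_edge m \<notin> P" "top_edge m \<notin> P"
      using uniq[of "(Suc m, 0)" "vert_edge (Suc m)" "bot_edge m"]
        uniq[of "(Suc m, 1)" "vert_edge (Suc m)" "top_edge m"] e0 vert by auto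
    then have "perfect_matching m (P - {vert_edge (Suc m)})"
    proof (intro restrict)
      show "e \<in> row_edges m" if "e \<in> P - {vert_edge (Suc m)}" for e
        using that sub \<open>bot_edge m \<notin> P\<close> \<open>top_edge m \<notin> P\<close> mem_row_edges_Suc_iff[of e m] by blast
    qed auto
    then show thesis using vertical e0 vert by blast
  qed
qed

lemma perfect_matching_bot_edge_iff_top_edge:
  "perfect_matching m P \<Longrightarrow> j < m \<Longrightarrow> bot_edge j \<in> P \<longleftrightarrow> top_edge j \<in> P"
proof (induction m arbitrary: P rule: less_induct)
  case (less m)
  then obtain m' where m: "m = Suc m'" by (cases m) auto
  from less.prems(1) show ?case unfolding m
  proof (cases rule: perfect_matching_Suc_cases)
    case vertical
    then have "bot_edge m' \<notin> P" "top_edge m' \<notin> P"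
      using perfect_matching_subset[OF vertical(2)] by auto
    moreover have "j < m' \<Longrightarrow> ?thesis"
      using less.IH[of m' "P - {vert_edge (Suc m')}"] vertical(2) m by simp
    ultimately show ?thesis using less.prems(2) m by (cases "j = m'") auto
  next
    case horizontal
    consider "j = m'" | k where "m' = Suc k" "j = k" | k where "m' = Suc k" "j < k"
      using less.prems(2) m by (cases m') (auto simp: less_Suc_eq)
    then show ?thesis
    proof cases
      case 1
      then show ?thesis using horizontal by simp
    next
      case (2 k)
      then show ?thesis using perfect_matching_subset[OF horizontal(3)] by auto
    next
      case (3 k)
      then show ?thesis
        using less.IH[of k "P - {bot_edge m', top_edge m'}"] horizontal(3) m by simp
    qed
  qed
qed

lemma matchings_Suc_Suc:
  "matchings (Suc (Suc m)) =
     insert (vert_edge (Suc (Suc m))) ` matchings (Suc m) \<union> add_tile (Suc m) ` matchings m"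
proof (intro set_eqI iffI)
  fix P assume "P \<in> matchings (Suc (Suc m))"
  then have "perfect_matching (Suc (Suc m)) P" by (simp add: matchings_def)
  then show "P \<in> insert (vert_edge (Suc (Suc m))) ` matchings (Suc m) \<union> add_tile (Suc m) ` matchings m"
  proof (cases rule: perfect_matching_Suc_cases)
    case vertical
    have "P = insert (vert_edge (Suc (Suc m))) (P - {vert_edge (Suc (Suc m))})"
      using vertical(1) by blast
    moreover have "P - {vert_edge (Suc (Suc m))} \<in> matchings (Suc m)"
      using vertical(2) by (simp add: matchings_def)
    ultimately show ?thesis by (rule UnI1[OF image_eqI])
  next
    case horizontal
    have "P = add_tile (Suc m) (P - {bot_edge (Suc m), top_edge (Suc m)})"
      using horizontal(1,2) unfolding add_tile_def by blast
    moreover have "P - {bot_edge (Suc m), top_edge (Suc m)} \<in> matchings m"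
      using horizontal(3) by (simp add: matchings_def)
    ultimately show ?thesis by (rule UnI2[OF image_eqI])
  qed
qed (auto simp: matchings_def intro: perfect_matching_insert_vert_edge perfect_matching_add_tile)

lemma mset_set_matchings_Suc_Suc:
  "mset_set (matchings (Suc (Suc m))) =
     image_mset (insert (vert_edge (Suc (Suc m)))) (mset_set (matchings (Suc m)))
     + image_mset (add_tile (Suc m)) (mset_set (matchings m))"
proof -
  have old_edges: "P \<subseteq> row_edges (Suc m)" if "P \<in> matchings (Suc m) \<union> matchings m" for P
  proof -
    have "perfect_matching (Suc m) P \<or> perfect_matching m P"
      using that by (simp add: matchings_def)
    then show ?thesis
      using perfect_matching_subset row_edges_mono[OF le_SucI[OF order_refl], of m] by blast
  qed
  have vert_new: "vert_edge (Suc (Suc m)) \<notin> P" if "P \<in> matchings (Suc m) \<union> matchings m" for P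
  proof -
    have "vert_edge (Suc (Suc m)) \<notin> row_edges (Suc m)" by simp
    then show ?thesis using old_edges[OF that] by blast
  qed
  have tile_new: "bot_edge (Suc m) \<notin> P" "top_edge (Suc m) \<notin> P" if "P \<in> matchings m" for P
  proof -
    have "bot_edge (Suc m) \<notin> row_edges m" "top_edge (Suc m) \<notin> row_edges m" by simp_all
    then show "bot_edge (Suc m) \<notin> P" "top_edge (Suc m) \<notin> P"
      using that perfect_matching_subset unfolding matchings_def by blast+
  qed
  have inj_vert: "inj_on (insert (vert_edge (Suc (Suc m)))) (matchings (Suc m))"
    by (rule inj_onI) (metis Diff_insert_absorb UnI1 vert_new)
  have remove_tile: "add_tile (Suc m) P - {bot_edge (Suc m), top_edge (Suc m)} = P"
    if "P \<in> matchings m" for P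
    using tile_new[OF that] unfolding add_tile_def by blast
  have inj_tile: "inj_on (add_tile (Suc m)) (matchings m)"
    by (rule inj_onI) (metis remove_tile)
  have disjoint: "insert (vert_edge (Suc (Suc m))) ` matchings (Suc m) \<inter> add_tile (Suc m) ` matchings m = {}"
  proof (rule equals0I)
    fix X assume "X \<in> insert (vert_edge (Suc (Suc m))) ` matchings (Suc m) \<inter> add_tile (Suc m) ` matchings m"
    then obtain P where "vert_edge (Suc (Suc m)) \<in> X" "P \<in> matchings m" "X = add_tile (Suc m) P"
      by auto
    then show False using vert_new[of P] unfolding add_tile_def by simp
  qed
  show ?thesis
    unfolding matchings_Suc_Suc mset_set_Union[OF finite_imageI[OF finite_matchings]
        finite_imageI[OF finite_matchings] disjoint]
    by (simp add: image_mset_mset_set inj_vert inj_tile)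
qed

subsection \<open>Twisted tiles\<close>

lemma crosses_up_ray_iff:
  assumes "e \<in> row_edges m"
  shows "crosses_up_ray j e \<longleftrightarrow> e = top_edge j"
proof
  assume "crosses_up_ray j e"
  then obtain y where y: "y \<ge> 1" "e = {(j, y), (Suc j, y)}"
    unfolding crosses_up_ray_def by blast
  then have "(j, y) \<in> e" "(Suc j, y) \<in> e" by auto
  with assms y(1) show "e = top_edge j"
    by (auto simp: mem_row_edges_iff)
qed (auto simp: crosses_up_ray_def top_edge_def)

text \<open>Only the top edge of tile \<open>j\<close> crosses the ray above it, so \<open>j\<close> is twisted iff exactly one
  of \<open>P\<close> and \<open>P_min\<close> (the top edges of the even tiles) contains that edge.\<close>
lemma Twist_eq:
  assumes "P \<subseteq> row_edges m"
  shows "Twist m P = {j. j < m \<and> (top_edge j \<in> P \<longleftrightarrow> odd j)}"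
proof -
  let ?C = "P - P_min m \<union> (P_min m - P)"
  have "?C \<subseteq> row_edges m"
    using assms by (auto simp: P_min_def)
  then have "{e \<in> ?C. crosses_up_ray j e} = (if top_edge j \<in> ?C then {top_edge j} else {})" for j
    using crosses_up_ray_iff[of _ m j] by auto
  moreover have "top_edge j \<in> P_min m \<longleftrightarrow> j < m \<and> even j" for j
    by (auto simp: P_min_def)
  ultimately show ?thesis
    unfolding Twist_def interior_tiles_def by auto
qed

lemma Twist_subset: "Twist m P \<subseteq> {..<m}"
  by (auto simp: Twist_def interior_tiles_def)

lemma finite_Twist [simp]: "finite (Twist m P)"
  using Twist_subset finite_subset by blast

lemma Twist_insert_vert_edge:
  assumes "P \<subseteq> row_edges m"
  shows "Twist (Suc m) (insert (vert_edge (Suc m)) P) =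
           (if even m then insert m (Twist m P) else Twist m P)"
proof -
  have "insert (vert_edge (Suc m)) P \<subseteq> row_edges (Suc m)"
    using assms row_edges_mono[of m "Suc m"] by auto
  moreover have "top_edge m \<notin> P" using assms by auto
  ultimately show ?thesis
    unfolding Twist_eq[OF assms] by (auto simp: Twist_eq less_Suc_eq)
qed

lemma Twist_add_tile:
  assumes "P \<subseteq> row_edges m"
  shows "Twist (Suc (Suc m)) (add_tile (Suc m) P) =
           (if even m then insert m (insert (Suc m) (Twist m P)) else Twist m P)"
proof -
  have "add_tile (Suc m) P \<subseteq> row_edges (Suc (Suc m))"
    using assms row_edges_mono[of m "Suc (Suc m)"] by (auto simp: add_tile_def)
  moreover have "top_edge m \<notin> P" "top_edge (Suc m) \<notin> P" using assms by auto
  ultimately show ?thesis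
    unfolding Twist_eq[OF assms] by (auto simp: Twist_eq less_Suc_eq add_tile_def)
qed

subsection \<open>The exponent vector \<open>\<nu>\<close>\<close>

definition face_weight_count :: "nat \<Rightarrow> nat set \<Rightarrow> int" where
  "face_weight_count i T = int (card {j \<in> T. face_weight j = i})"

lemma face_weight_count_insert:
  assumes "finite T" "j \<notin> T"
  shows "face_weight_count i (insert j T) = face_weight_count i T + (if face_weight j = i then 1 else 0)"
proof -
  have "{x \<in> insert j T. face_weight x = i} =
          (if face_weight j = i then insert j {x \<in> T. face_weight x = i} else {x \<in> T. face_weight x = i})"
    by auto
  then show ?thesis
    unfolding face_weight_count_def using assms by simp
qed

lemma face_weight_eq_iff: "face_weight j = 1 \<longleftrightarrow> even j" "face_weight j = 2 \<longleftrightarrow> odd j"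
  by (auto simp: face_weight_def)

lemma N_count_eq: "N_count m 1 = int ((m + 1) div 2)" "N_count m 2 = int (m div 2)"
proof -
  have step: "N_count (Suc m) i = N_count m i + (if face_weight m = i then 1 else 0)" for m i
  proof -
    have "{j. j < Suc m \<and> face_weight j = i} =
            {j. j < m \<and> face_weight j = i} \<union> (if face_weight m = i then {m} else {})"
      by (auto simp: less_Suc_eq)
    then show ?thesis unfolding N_count_def by (simp add: card_Un_disjoint)
  qed
  have "N_count m 1 = int ((m + 1) div 2) \<and> N_count m 2 = int (m div 2)"
  proof (induction m)
    case 0
    then show ?case by (simp add: N_count_def)
  next
    case (Suc m)
    then show ?case by (auto simp: step face_weight_def elim: oddE)
  qed
  then show "N_count m 1 = int ((m + 1) div 2)" "N_count m 2 = int (m div 2)" by blast+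
qed

lemma edge_weight_simps [simp]:
  "edge_weight m (bot_edge j) = (if j < m then if even j then 2 else 1 else 0)"
  "edge_weight m (top_edge j) = (if j < m then if even j then 2 else 1 else 0)"
  "edge_weight m (vert_edge x) = 0"
proof -
  have the_tile: "j < m \<Longrightarrow> (THE j'. j' < m \<and> j = j') = j"
    by (rule the_equality) auto
  show "edge_weight m (bot_edge j) = (if j < m then if even j then 2 else 1 else 0)"
    "edge_weight m (top_edge j) = (if j < m then if even j then 2 else 1 else 0)"
    by (auto simp: edge_weight_def face_weight_def the_tile)
  show "edge_weight m (vert_edge x) = 0"
    by (auto simp: edge_weight_def)
qed

lemma card_edges_of_weight:
  assumes "perfect_matching m P" "i > 0"
  shows "card {e \<in> P. edge_weight m e = i} =
           2 * card {j. j < m \<and> (if even j then 2 else 1) = i \<and> top_edge j \<in> P}"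
proof -
  define J where "J = {j. j < m \<and> (if even j then 2 else 1) = i \<and> top_edge j \<in> P}"
  have pair: "j < m \<Longrightarrow> bot_edge j \<in> P \<longleftrightarrow> top_edge j \<in> P" for j
    using perfect_matching_bot_edge_iff_top_edge assms(1) by blast
  have "{e \<in> P. edge_weight m e = i} = bot_edge ` J \<union> top_edge ` J"
  proof (intro set_eqI iffI)
    fix e assume e: "e \<in> {e \<in> P. edge_weight m e = i}"
    then have "e \<in> row_edges m" using perfect_matching_subset[OF assms(1)] by auto
    then show "e \<in> bot_edge ` J \<union> top_edge ` J"
      using e pair assms(2) by (auto simp: mem_row_edges_iff J_def)
  qed (use pair in \<open>auto simp: J_def\<close>)
  moreover have "card (bot_edge ` J \<union> top_edge ` J) = card J + card J"
    by (subst card_Un_disjoint) (auto simp: J_def card_image inj_on_def)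
  ultimately show ?thesis unfolding J_def by simp
qed

text \<open>Because horizontal edges come in pairs, \<open>a\<^sub>1, a\<^sub>2\<close> are determined by the twisted tiles.\<close>
lemma nu_eq_face_weight_counts:
  assumes "perfect_matching m P"
  defines "T \<equiv> Twist m P"
  shows "nu m P = (2 * face_weight_count 2 T - int ((m + 1) div 2),
                   2 * (int ((m + 1) div 2) - face_weight_count 1 T) - int (m div 2),
                   face_weight_count 1 T, face_weight_count 2 T)"
proof -
  have T: "T = {j. j < m \<and> (top_edge j \<in> P \<longleftrightarrow> odd j)}"
    unfolding T_def by (rule Twist_eq[OF perfect_matching_subset[OF assms(1)]])
  let ?even_in = "card {j. j < m \<and> even j \<and> top_edge j \<in> P}"
  let ?even_out = "card {j. j < m \<and> even j \<and> top_edge j \<notin> P}"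
  have y1: "face_weight_count 1 T = int ?even_out"
    unfolding face_weight_count_def T face_weight_eq_iff by (rule arg_cong[where f="\<lambda>A. int (card A)"]) auto
  have y2: "face_weight_count 2 T = int (card {j. j < m \<and> odd j \<and> top_edge j \<in> P})"
    unfolding face_weight_count_def T face_weight_eq_iff by (rule arg_cong[where f="\<lambda>A. int (card A)"]) auto
  have "{j. j < m \<and> (if even j then 2 else 1) = (1::nat) \<and> top_edge j \<in> P} =
          {j. j < m \<and> odd j \<and> top_edge j \<in> P}"
    by auto
  then have a1: "a_count m 1 P = 2 * int (card {j. j < m \<and> odd j \<and> top_edge j \<in> P})"
    unfolding a_count_def card_edges_of_weight[OF assms(1) zero_less_one] by simp
  have "{j. j < m \<and> (if even j then 2 else 1) = (2::nat) \<and> top_edge j \<in> P} =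
          {j. j < m \<and> even j \<and> top_edge j \<in> P}"
    by auto
  then have a2: "a_count m 2 P = 2 * int ?even_in"
    unfolding a_count_def card_edges_of_weight[OF assms(1) zero_less_numeral] by simp
  have "card {j. j < m \<and> even j} =
          card ({j. j < m \<and> even j \<and> top_edge j \<in> P} \<union> {j. j < m \<and> even j \<and> top_edge j \<notin> P})"
    by (rule arg_cong[where f=card]) auto
  also have "\<dots> = ?even_in + ?even_out"
    by (rule card_Un_disjoint) auto
  finally have N1: "int ((m + 1) div 2) = int ?even_in + int ?even_out"
    unfolding N_count_eq(1)[symmetric] N_count_def face_weight_eq_iff by simp
  have y: "y_count m i P = face_weight_count i T" for i
    by (simp add: y_count_def face_weight_count_def T_def)
  show ?thesis
    unfolding nu_def N_count_eq y using a1 a2 y1 y2 N1 by simp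
qed

lemma sum_face_weight_cases:
  assumes "finite T"
  shows "(\<Sum>j\<in>T. if face_weight j = 1 then a else b) = a * face_weight_count 1 T + b * face_weight_count 2 T"
proof -
  have "T \<inter> - {j. face_weight j = 1} = {j \<in> T. face_weight j = 2}"
    by (auto simp: face_weight_def)
  moreover have "T \<inter> {j. face_weight j = 1} = {j \<in> T. face_weight j = 1}" by auto
  ultimately show ?thesis
    unfolding sum.If_cases[OF assms] face_weight_count_def by simp
qed

lemma sum_alpha2_H_eq:
  "finite T \<Longrightarrow> (\<Sum>j\<in>T. alpha2_H n j) = (\<Sum>j\<in>T. alpha2_G n j) + face_weight_count 1 T"
proof -
  assume "finite T"
  have "(\<Sum>j\<in>T. alpha2_H n j) = (\<Sum>j\<in>T. alpha2_G n j + (if face_weight j = 1 then 1 else 0))"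
    by (rule sum.cong) (auto simp: alpha2_H_def alpha2_G_def Let_def)
  then show ?thesis
    using sum_face_weight_cases[OF \<open>finite T\<close>, of 1 0] by (simp add: sum.distrib)
qed

lemma sum_alpha2_G_Suc:
  "finite T \<Longrightarrow> (\<Sum>j\<in>T. alpha2_G n j) =
     (\<Sum>j\<in>T. alpha2_G (Suc n) j) + face_weight_count 1 T - face_weight_count 2 T"
proof -
  assume "finite T"
  have "(\<Sum>j\<in>T. alpha2_G n j) = (\<Sum>j\<in>T. alpha2_G (Suc n) j + (if face_weight j = 1 then 1 else -1))"
    by (rule sum.cong) (auto simp: alpha2_G_def Let_def)
  then show ?thesis
    using sum_face_weight_cases[OF \<open>finite T\<close>, of 1 "-1"] by (simp add: sum.distrib)
qed

lemma sum_alpha2_H_Suc: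
  "finite T \<Longrightarrow> (\<Sum>j\<in>T. alpha2_H n j) =
     (\<Sum>j\<in>T. alpha2_H (Suc n) j) + face_weight_count 1 T - face_weight_count 2 T"
proof -
  assume "finite T"
  have "(\<Sum>j\<in>T. alpha2_H n j) = (\<Sum>j\<in>T. alpha2_H (Suc n) j + (if face_weight j = 1 then 1 else -1))"
    by (rule sum.cong) (auto simp: alpha2_H_def Let_def)
  then show ?thesis
    using sum_face_weight_cases[OF \<open>finite T\<close>, of 1 "-1"] by (simp add: sum.distrib)
qed

subsection \<open>Matching the monomials\<close>

definition r_term :: "nat \<Rightarrow> vert set set \<Rightarrow> qmono" where
  "r_term n P = (alpha2_P_G n P, nu (2 * n + 1) P)"

definition s_term :: "nat \<Rightarrow> vert set set \<Rightarrow> qmono" where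
  "s_term n P = (alpha2_P_H n P, nu (2 * n) P)"

lemma r_snake_eq: "r_snake n = image_mset (r_term n) (mset_set (matchings (2 * n + 1)))"
  unfolding r_snake_def r_term_def[abs_def] matchings_def ..

lemma s_snake_eq: "s_snake n = image_mset (s_term n) (mset_set (matchings (2 * n)))"
  unfolding s_snake_def s_term_def[abs_def] matchings_def ..

lemma r_term_insert_vert_edge_times_x1:
  assumes pm: "perfect_matching (2 * n) P"
  shows "mono_mult (r_term n (insert (vert_edge (Suc (2 * n))) P)) (0, (1, 0, 0, 0)) =
         mono_mult (mono_mult (1, (0, 0, 0, 0)) (s_term n P)) (0, (0, 0, 1, 0))"
proof -
  let ?P' = "insert (vert_edge (Suc (2 * n))) P" and ?T = "Twist (2 * n) P"
  have pm': "perfect_matching (2 * n + 1) ?P'"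
    using perfect_matching_insert_vert_edge[OF pm] by simp
  have new: "2 * n \<notin> ?T" using Twist_subset by blast
  have twist: "Twist (2 * n + 1) ?P' = insert (2 * n) ?T"
    using Twist_insert_vert_edge[OF perfect_matching_subset[OF pm]] by simp
  have c1: "face_weight_count 1 (insert (2 * n) ?T) = face_weight_count 1 ?T + 1"
   and c2: "face_weight_count 2 (insert (2 * n) ?T) = face_weight_count 2 ?T"
    using face_weight_count_insert[OF finite_Twist new] by (simp_all add: face_weight_def)
  have "alpha2_P_G n ?P' = int n + (\<Sum>j\<in>?T. alpha2_G n j)"
    unfolding alpha2_P_G_def twist using new by (simp add: alpha2_G_def face_weight_def)
  moreover have "alpha2_P_H n P = (\<Sum>j\<in>?T. alpha2_G n j) + face_weight_count 1 ?T"
    unfolding alpha2_P_H_def by (rule sum_alpha2_H_eq) simp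
  moreover note nu_eq_face_weight_counts[OF pm', unfolded twist c1 c2] nu_eq_face_weight_counts[OF pm]
  ultimately show ?thesis
    unfolding r_term_def s_term_def mono_mult_def by simp
qed

lemma r_term_add_tile_times_x1:
  assumes pm: "perfect_matching (2 * n + 1) P"
  shows "mono_mult (r_term (Suc n) (add_tile (Suc (2 * n + 1)) P)) (0, (1, 0, 0, 0)) =
         mono_mult (r_term n P) (0, (0, 1, 0, 0))"
proof -
  let ?P' = "add_tile (Suc (2 * n + 1)) P" and ?T = "Twist (2 * n + 1) P"
  have pm': "perfect_matching (2 * Suc n + 1) ?P'"
    using perfect_matching_add_tile[OF pm] by simp
  have twist: "Twist (2 * Suc n + 1) ?P' = ?T"
    using Twist_add_tile[OF perfect_matching_subset[OF pm]] by simp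
  have "alpha2_P_G n P = (\<Sum>j\<in>?T. alpha2_G (Suc n) j) + face_weight_count 1 ?T - face_weight_count 2 ?T"
    unfolding alpha2_P_G_def by (rule sum_alpha2_G_Suc) simp
  moreover note nu_eq_face_weight_counts[OF pm', unfolded twist] nu_eq_face_weight_counts[OF pm]
  ultimately show ?thesis
    unfolding r_term_def alpha2_P_G_def[of "Suc n"] twist mono_mult_def by simp
qed

lemma x2_times_s_term_insert_vert_edge:
  assumes pm: "perfect_matching (2 * n + 1) P"
  shows "mono_mult (0, (0, 1, 0, 0)) (s_term (Suc n) (insert (vert_edge (Suc (2 * n + 1))) P)) =
         r_term n P"
proof -
  let ?P' = "insert (vert_edge (Suc (2 * n + 1))) P" and ?T = "Twist (2 * n + 1) P"
  have pm': "perfect_matching (2 * Suc n) ?P'"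
    using perfect_matching_insert_vert_edge[OF pm] by simp
  have twist: "Twist (2 * Suc n) ?P' = ?T"
    using Twist_insert_vert_edge[OF perfect_matching_subset[OF pm]] by simp
  have "alpha2_P_H (Suc n) ?P' = (\<Sum>j\<in>?T. alpha2_G (Suc n) j) + face_weight_count 1 ?T"
    unfolding alpha2_P_H_def twist by (rule sum_alpha2_H_eq) simp
  moreover have "alpha2_P_G n P =
      (\<Sum>j\<in>?T. alpha2_G (Suc n) j) + face_weight_count 1 ?T - face_weight_count 2 ?T"
    unfolding alpha2_P_G_def by (rule sum_alpha2_G_Suc) simp
  moreover note nu_eq_face_weight_counts[OF pm', unfolded twist] nu_eq_face_weight_counts[OF pm]
  ultimately show ?thesis
    unfolding r_term_def s_term_def mono_mult_def by simp
qed

lemma x2_times_s_term_add_tile: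
  assumes pm: "perfect_matching (2 * n) P"
  shows "mono_mult (0, (0, 1, 0, 0)) (s_term (Suc n) (add_tile (Suc (2 * n)) P)) =
         mono_mult (mono_mult (-1, (0, 0, 0, 0)) (0, (1, 0, 1, 1))) (s_term n P)"
proof -
  let ?P' = "add_tile (Suc (2 * n)) P" and ?T = "Twist (2 * n) P"
  have pm': "perfect_matching (2 * Suc n) ?P'"
    using perfect_matching_add_tile[OF pm] by simp
  have new: "2 * n \<notin> ?T" "Suc (2 * n) \<notin> ?T" using Twist_subset[of "2 * n" P] by auto
  have twist: "Twist (2 * Suc n) ?P' = insert (2 * n) (insert (Suc (2 * n)) ?T)"
    using Twist_add_tile[OF perfect_matching_subset[OF pm]] by simp
  have c1: "face_weight_count 1 (insert (2 * n) (insert (Suc (2 * n)) ?T)) = face_weight_count 1 ?T + 1"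
   and c2: "face_weight_count 2 (insert (2 * n) (insert (Suc (2 * n)) ?T)) = face_weight_count 2 ?T + 1"
    using new face_weight_count_insert[OF finite_Twist new(2)]
      face_weight_count_insert[of "insert (Suc (2 * n)) ?T" "2 * n"]
    by (simp_all add: face_weight_def)
  have "alpha2_P_H (Suc n) ?P' = (\<Sum>j\<in>?T. alpha2_H (Suc n) j)"
    unfolding alpha2_P_H_def twist using new by (simp add: alpha2_H_def face_weight_def)
  moreover have "alpha2_P_H n P =
      (\<Sum>j\<in>?T. alpha2_H (Suc n) j) + face_weight_count 1 ?T - face_weight_count 2 ?T"
    unfolding alpha2_P_H_def by (rule sum_alpha2_H_Suc) simp
  moreover note nu_eq_face_weight_counts[OF pm', unfolded twist c1 c2] nu_eq_face_weight_counts[OF pm]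
  ultimately show ?thesis
    unfolding s_term_def mono_mult_def by simp
qed

lemma qmult_singleton_right: "qmult A {#y#} = image_mset (\<lambda>x. mono_mult x y) A"
  unfolding qmult_def by (induction A) auto

lemma qmult_singleton_left: "qmult {#x#} B = image_mset (mono_mult x) B"
  unfolding qmult_def by simp

lemma image_mset_cong_matchings:
  "(\<And>P. perfect_matching m P \<Longrightarrow> f P = g P) \<Longrightarrow>
     image_mset f (mset_set (matchings m)) = image_mset g (mset_set (matchings m))"
  by (rule image_mset_cong) (simp add: finite_matchings[unfolded matchings_def] matchings_def)

lemma r_snake_Suc_times_X1:
  "qmult (r_snake (Suc n)) X1 =
     qmult (qmult (qM 1 (0, 0, 0, 0)) (s_snake (Suc n))) Y1 + qmult (r_snake n) X2"
proof -
  have tiles: "2 * Suc n + 1 = Suc (Suc (2 * n + 1))" by simp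
  have "qmult (r_snake (Suc n)) X1 =
      image_mset (\<lambda>P. mono_mult (r_term (Suc n) P) (0, (1, 0, 0, 0)))
        (mset_set (matchings (Suc (Suc (2 * n + 1)))))"
    unfolding r_snake_eq X1_def qM_def qmult_singleton_right tiles by (simp add: image_mset.compositionality comp_def)
  also have "\<dots> =
      image_mset (\<lambda>P. mono_mult (r_term (Suc n) (insert (vert_edge (Suc (2 * Suc n))) P)) (0, (1, 0, 0, 0)))
        (mset_set (matchings (2 * Suc n)))
    + image_mset (\<lambda>P. mono_mult (r_term (Suc n) (add_tile (Suc (2 * n + 1)) P)) (0, (1, 0, 0, 0)))
        (mset_set (matchings (2 * n + 1)))"
    unfolding mset_set_matchings_Suc_Suc by (simp add: image_mset.compositionality comp_def)
  also have "\<dots> =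
      image_mset (\<lambda>P. mono_mult (mono_mult (1, (0, 0, 0, 0)) (s_term (Suc n) P)) (0, (0, 0, 1, 0)))
        (mset_set (matchings (2 * Suc n)))
    + image_mset (\<lambda>P. mono_mult (r_term n P) (0, (0, 1, 0, 0))) (mset_set (matchings (2 * n + 1)))"
    using r_term_insert_vert_edge_times_x1[of "Suc n"] r_term_add_tile_times_x1[of n]
    by (intro arg_cong2[where f = "(+)"] image_mset_cong_matchings) simp_all
  also have "\<dots> = qmult (qmult (qM 1 (0, 0, 0, 0)) (s_snake (Suc n))) Y1 + qmult (r_snake n) X2"
    unfolding s_snake_eq r_snake_eq qM_def Y1_def X2_def qmult_singleton_left qmult_singleton_right
    by (simp add: image_mset.compositionality comp_def)
  finally show ?thesis .
qed

lemma X2_times_s_snake_Suc: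
  "qmult X2 (s_snake (Suc n)) =
     r_snake n + qmult (qmult (qM (-1) (0, 0, 0, 0)) (qM 0 (1, 0, 1, 1))) (s_snake n)"
proof -
  have tiles: "2 * Suc n = Suc (Suc (2 * n))" by simp
  have "qmult X2 (s_snake (Suc n)) =
      image_mset (\<lambda>P. mono_mult (0, (0, 1, 0, 0)) (s_term (Suc n) P)) (mset_set (matchings (Suc (Suc (2 * n)))))"
    unfolding s_snake_eq X2_def qM_def qmult_singleton_left tiles by (simp add: image_mset.compositionality comp_def)
  also have "\<dots> =
      image_mset (\<lambda>P. mono_mult (0, (0, 1, 0, 0)) (s_term (Suc n) (insert (vert_edge (Suc (2 * n + 1))) P)))
        (mset_set (matchings (2 * n + 1)))
    + image_mset (\<lambda>P. mono_mult (0, (0, 1, 0, 0)) (s_term (Suc n) (add_tile (Suc (2 * n)) P)))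
        (mset_set (matchings (2 * n)))"
    unfolding mset_set_matchings_Suc_Suc by (simp add: image_mset.compositionality comp_def)
  also have "\<dots> = image_mset (r_term n) (mset_set (matchings (2 * n + 1)))
    + image_mset (\<lambda>P. mono_mult (mono_mult (-1, (0, 0, 0, 0)) (0, (1, 0, 1, 1))) (s_term n P))
        (mset_set (matchings (2 * n)))"
    using x2_times_s_term_insert_vert_edge[of n] x2_times_s_term_add_tile[of n]
    by (intro arg_cong2[where f = "(+)"] image_mset_cong_matchings) simp_all
  also have "\<dots> = r_snake n + qmult (qmult (qM (-1) (0, 0, 0, 0)) (qM 0 (1, 0, 1, 1))) (s_snake n)"
    unfolding s_snake_eq r_snake_eq qM_def qmult_singleton_left
    by (simp add: qmult_singleton_left image_mset.compositionality comp_def)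
  finally show ?thesis .
qed

theorem mainTheorem7:
  fixes n :: nat
  assumes "n \<ge> 1"
  shows "qmult (r_snake n) X1 = qmult (qmult (qM 1 (0, 0, 0, 0)) (s_snake n)) Y1
                                 + qmult (r_snake (n - 1)) X2
         \<and> qmult X2 (s_snake n) = r_snake (n - 1)
                                 + qmult (qmult (qM (-1) (0, 0, 0, 0)) (qM 0 (1, 0, 1, 1))) (s_snake (n - 1))"
proof -
  obtain k where "n = Suc k" using assms by (cases n) auto
  then show ?thesis
    using r_snake_Suc_times_X1[of k] X2_times_s_snake_Suc[of k] by simp
qed

end
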